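(* Let $A=(a_0,\dots,a_{n-1})$ be an array of pairwise distinct numbers, $k>1$, and consider two consecutive segments $(q,j,\cdot)$ and $(q',j',\cdot)$ added by Cover-exact$(A,k)$ in consecutive iterations. Let $X=(x_1,\dots,x_k)$ be the lexicographically minimal (with respect to the sequence of positions) increasing subsequence of length $k$ of $(a_q,\dots,a_j)$, and $X'=(x'_1,\dots,x'_k)$ the lexicographically minimal increasing subsequence of length $k$ of $(a_{q'},\dots,a_{j'})$, where $x_t,x'_t$ denote positions. Then $x'_i\ge x_{i+1}$ for all $1\le i<k$.
   Context: For $i\le j$, $\mathrm{LIS}(i,j)$ denotes the length of a longest increasing subsequence of $(a_i,\dots,a_j)$. Cover-exact$(A,k)$: set $C=\emptyset$, $i=0$. Repeat: let $j$ be the smallest index $\ge i$ with $\mathrm{LIS}(i,j)\ge k$; if none exists, return $C$. Let $q$ be the largest index $\le j$ with $\mathrm{LIS}(q,j)\ge k$. Add the segment $(q,j,L)$ to $C$, where $L$ is a longest increasing subsequence of $(a_q,\dots,a_j)$, and set $i=q+1$. *)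

theory Defs
  imports Complex_Main
begin

text \<open>The array A = (a_0,...,a_{n-1}) is modelled by a function a :: nat \<Rightarrow> real
  together with its length n. An increasing subsequence of (a_i,...,a_j) is
  represented by its strictly increasing list of positions in {i..j}.\<close>

definition inc_sub :: "(nat \<Rightarrow> real) \<Rightarrow> nat \<Rightarrow> nat \<Rightarrow> nat list \<Rightarrow> bool" where
  "inc_sub a i j xs \<longleftrightarrow> sorted_wrt (<) xs \<and> set xs \<subseteq> {i..j}
     \<and> sorted_wrt (\<lambda>p r. a p < a r) xs"

definition LIS :: "(nat \<Rightarrow> real) \<Rightarrow> nat \<Rightarrow> nat \<Rightarrow> nat" where
  "LIS a i j = Max (length ` {xs. inc_sub a i j xs})"

text \<open>One iteration of Cover-exact(A,k) started at index i: returns the segment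
  (q,j) it adds, or None if the algorithm terminates.\<close>

definition cover_step :: "(nat \<Rightarrow> real) \<Rightarrow> nat \<Rightarrow> nat \<Rightarrow> nat \<Rightarrow> (nat \<times> nat) option" where
  "cover_step a n k i =
    (if \<exists>j. i \<le> j \<and> j < n \<and> k \<le> LIS a i j then
       (let j = (LEAST j. i \<le> j \<and> j < n \<and> k \<le> LIS a i j);
            q = (GREATEST q. q \<le> j \<and> k \<le> LIS a q j)
        in Some (q, j))
     else None)"

text \<open>Values of the variable i at the start of some iteration of Cover-exact(A,k).\<close>

inductive cover_reach :: "(nat \<Rightarrow> real) \<Rightarrow> nat \<Rightarrow> nat \<Rightarrow> nat \<Rightarrow> bool"
  for a n k where
  start: "cover_reach a n k 0"
| step: "cover_reach a n k i \<Longrightarrow> cover_step a n k i = Some (q, j) \<Longrightarrow> cover_reach a n k (Suc q)"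

definition lexmin_inc_sub :: "(nat \<Rightarrow> real) \<Rightarrow> nat \<Rightarrow> nat \<Rightarrow> nat \<Rightarrow> nat list \<Rightarrow> bool" where
  "lexmin_inc_sub a k q j X \<longleftrightarrow> inc_sub a q j X \<and> length X = k \<and>
     (\<forall>Y. inc_sub a q j Y \<and> length Y = k \<longrightarrow> X = Y \<or> (X, Y) \<in> lexord {(x, y). x < y})"

end

theory Submission
  imports Defs
begin

text \<open>Let S be the set of i with x'_i < x_{i+1} and suppose it is nonempty. For i in S the values
  satisfy a(x_{i+1}) < a(x'_i): otherwise x'_1,...,x'_i,x_{i+1},...,x_k would be a length-k
  increasing subsequence of (a_{q'},...,a_j), contradicting the maximality of q since q' > q.
  Let t = max S and let r..t be the maximal run of S ending at t. If a(x_{t+2}) < a(x'_t),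
  then x_2,...,x_{t+2},x'_{t+1},...,x'_{k-1} is a length-k increasing subsequence of
  (a_{q+1},...,a_{j'-1}), contradicting the minimality of j'. Otherwise replacing
  x_{r+1},...,x_{t+1} by x'_r,...,x'_t in X gives a length-k increasing subsequence of
  (a_q,...,a_j) that is lexicographically smaller than X; it is increasing at the left end
  because x_r < x'_r, by maximality of the run (or x_1 = q < q' if r = 1).\<close>

lemma inc_sub_iff:
  "inc_sub a lo hi L \<longleftrightarrow> (\<forall>u<length L. lo \<le> L!u \<and> L!u \<le> hi) \<and>
     (\<forall>u. Suc u < length L \<longrightarrow> L!u < L!Suc u \<and> a (L!u) < a (L!Suc u))"
proof -
  have lt: "transp ((<) :: nat \<Rightarrow> nat \<Rightarrow> bool)" and val: "transp (\<lambda>p r. a p < a (r::nat))"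
    by (auto simp: transp_def)
  show ?thesis
    unfolding inc_sub_def sorted_wrt_iff_nth_Suc_transp[OF lt] sorted_wrt_iff_nth_Suc_transp[OF val]
    by (auto simp: in_set_conv_nth subset_iff)
qed

lemma inc_sub_map_upt_iff:
  "inc_sub a lo hi (map f [0..<m]) \<longleftrightarrow> (\<forall>u<m. lo \<le> f u \<and> f u \<le> hi) \<and>
     (\<forall>u. Suc u < m \<longrightarrow> f u < f (Suc u) \<and> a (f u) < a (f (Suc u)))"
  by (simp add: inc_sub_iff)

lemma inc_sub_nth_less:
  assumes "inc_sub a lo hi L" "u < v" "v < length L"
  shows "L!u < L!v \<and> a (L!u) < a (L!v)"
  using assms sorted_wrt_nth_less[of "(<)" L u v] sorted_wrt_nth_less[of "\<lambda>p r. a p < a r" L u v]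
  by (simp add: inc_sub_def)

lemma inc_sub_nth_bounds:
  assumes "inc_sub a lo hi L" "u < length L"
  shows "lo \<le> L!u \<and> L!u \<le> hi"
proof -
  have "L!u \<in> set L" using assms(2) by simp
  then show ?thesis using assms(1) by (auto simp: inc_sub_def)
qed

lemma length_le_LIS:
  assumes "inc_sub a lo hi L"
  shows "length L \<le> LIS a lo hi"
proof -
  have "length xs \<le> card {lo..hi}" if "inc_sub a lo hi xs" for xs
  proof -
    have "distinct xs" "set xs \<subseteq> {lo..hi}"
      using that strict_sorted_iff by (auto simp: inc_sub_def)
    then show ?thesis by (metis card_mono distinct_card finite_atLeastAtMost)
  qed
  then have "{xs. inc_sub a lo hi xs} \<subseteq> {xs. set xs \<subseteq> {lo..hi} \<and> length xs \<le> card {lo..hi}}"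
    by (auto simp: inc_sub_def)
  then have "finite {xs. inc_sub a lo hi xs}"
    using finite_lists_length_le[of "{lo..hi}" "card {lo..hi}"] finite_subset by blast
  then show ?thesis unfolding LIS_def using assms by auto
qed

lemma lexmin_inc_sub_nth_le:
  assumes X: "lexmin_inc_sub a k lo hi X" and Y: "inc_sub a lo hi Y" "length Y = k"
    and m: "m < k" "take m Y = take m X"
  shows "X!m \<le> Y!m"
proof (rule ccontr)
  assume less: "\<not> X!m \<le> Y!m"
  have "length X = k" "X = Y \<or> (X, Y) \<in> lexord {(x, y). x < y}"
    using X Y by (auto simp: lexmin_inc_sub_def)
  with less Y(2) obtain i where i: "i < k" "take i X = take i Y" "X!i < Y!i"
    by (auto simp: lexord_take_index_conv)
  have agree: "X!u = Y!u" if "u < max i m" for u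
    using i(2) m(2) that by (metis less_max_iff_disj nth_take)
  consider "i < m" | "i = m" | "m < i" by linarith
  then show False
  proof cases
    case 1
    then show False using agree[of i] i by simp
  next
    case 2
    then show False using i less by simp
  next
    case 3
    then show False using agree[of m] i less by simp
  qed
qed

lemma run_start_exists:
  fixes S :: "nat set"
  assumes "s \<in> S"
  shows "\<exists>r\<le>s. {r..s} \<subseteq> S \<and> (r = 0 \<or> r - 1 \<notin> S)"
  using assms
proof (induction s)
  case 0
  then show ?case by auto
next
  case (Suc s)
  show ?case
  proof (cases "s \<in> S")
    case True
    with Suc.IH obtain r where "r \<le> s" "{r..s} \<subseteq> S" "r = 0 \<or> r - 1 \<notin> S" by blast
    with Suc.prems show ?thesis by (intro exI[of _ r]) (auto simp: le_Suc_eq)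
  next
    case False
    with Suc.prems show ?thesis by (intro exI[of _ "Suc s"]) auto
  qed
qed

lemma cover_step_Some_unfold:
  assumes "cover_step a n k i = Some (q, j)"
  shows "\<exists>j. i \<le> j \<and> j < n \<and> k \<le> LIS a i j"
    "j = (LEAST j. i \<le> j \<and> j < n \<and> k \<le> LIS a i j)"
    "q = (GREATEST q. q \<le> j \<and> k \<le> LIS a q j)"
  using assms by (auto simp: cover_step_def Let_def split: if_splits)

lemma cover_step_end:
  assumes "cover_step a n k i = Some (q, j)"
  shows "i \<le> j \<and> j < n \<and> k \<le> LIS a i j"
  using LeastI_ex[OF cover_step_Some_unfold(1)[OF assms]] cover_step_Some_unfold(2)[OF assms]
  by simp

lemma cover_step_start_ge:
  assumes "cover_step a n k i = Some (q, j)"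
  shows "i \<le> q"
  unfolding cover_step_Some_unfold(3)[OF assms]
  using cover_step_end[OF assms] by (intro Greatest_le_nat[where b = j]) auto

lemma cover_step_latest_start:
  assumes "cover_step a n k i = Some (q, j)"
    and "inc_sub a lo j L" "k \<le> length L" "lo \<le> j"
  shows "lo \<le> q"
  unfolding cover_step_Some_unfold(3)[OF assms(1)]
  using assms(3,4) length_le_LIS[OF assms(2)] by (intro Greatest_le_nat[where b = j]) auto

lemma cover_step_earliest_end:
  assumes "cover_step a n k i = Some (q, j)"
    and "inc_sub a i hi L" "k \<le> length L" "i \<le> hi" "hi < n"
  shows "j \<le> hi"
  unfolding cover_step_Some_unfold(2)[OF assms(1)]
  using assms(3-5) length_le_LIS[OF assms(2)] by (intro Least_le) auto

locale consecutive_segments =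
  fixes a :: "nat \<Rightarrow> real" and n k q j q' j' :: nat and X X' :: "nat list"
  assumes inj: "inj_on a {..<n}"
    and k: "1 < k"
    and X: "lexmin_inc_sub a k q j X"
    and X': "inc_sub a q' j' X'" "length X' = k"
    and j_less: "j < n" and j'_less: "j' < n"
    and q_less: "q < q'"
    and latest_start: "\<And>lo L. inc_sub a lo j L \<Longrightarrow> k \<le> length L \<Longrightarrow> lo \<le> j \<Longrightarrow> lo \<le> q"
    and earliest_end:
      "\<And>hi L. inc_sub a (Suc q) hi L \<Longrightarrow> k \<le> length L \<Longrightarrow> Suc q \<le> hi \<Longrightarrow> hi < n \<Longrightarrow> j' \<le> hi"
begin

lemma X_inc_sub: "inc_sub a q j X" and length_X: "length X = k"
  using X by (auto simp: lexmin_inc_sub_def)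

lemma X_less: "u < v \<Longrightarrow> v < k \<Longrightarrow> X!u < X!v \<and> a (X!u) < a (X!v)"
  using inc_sub_nth_less[OF X_inc_sub] length_X by simp

lemma X'_less: "u < v \<Longrightarrow> v < k \<Longrightarrow> X'!u < X'!v \<and> a (X'!u) < a (X'!v)"
  using inc_sub_nth_less[OF X'(1)] X'(2) by simp

lemma X_bounds: "u < k \<Longrightarrow> q \<le> X!u \<and> X!u \<le> j"
  using inc_sub_nth_bounds[OF X_inc_sub] length_X by simp

lemma X'_bounds: "u < k \<Longrightarrow> q' \<le> X'!u \<and> X'!u \<le> j'"
  using inc_sub_nth_bounds[OF X'(1)] X'(2) by simp

lemma value_neq: "u < k \<Longrightarrow> v < k \<Longrightarrow> X!u \<noteq> X'!v \<Longrightarrow> a (X!u) \<noteq> a (X'!v)"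
  using X_bounds X'_bounds j_less j'_less inj_onD[OF inj, of "X!u" "X'!v"] by fastforce

lemma X_0: "X!0 = q"
proof -
  have "X!0 \<le> X!u \<and> X!u \<le> j" if "u < k" for u
    using X_less[of 0 u] X_bounds[of u] that by (cases u) auto
  then have "inc_sub a (X!0) j X" using X_inc_sub length_X by (simp add: inc_sub_iff)
  then have "X!0 \<le> q" using latest_start[of "X!0" X] X_bounds[of 0] k length_X by simp
  then show ?thesis using X_bounds[of 0] k by simp
qed

definition S :: "nat set" where
  "S = {s. 1 \<le> s \<and> s < k \<and> X'!(s-1) < X!s}"

lemma S_value_less:
  assumes "s \<in> S"
  shows "a (X!s) < a (X'!(s-1))"
proof (rule ccontr)
  assume not_less: "\<not> ?thesis"
  have s: "1 \<le> s" "s < k" "s - 1 < k" "X'!(s-1) < X!s" using assms by (auto simp: S_def)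
  then have lt: "a (X'!(s-1)) < a (X!s)"
    using not_less value_neq[of s "s-1"] by fastforce
  define f where "f u = (if u < s then X'!u else X!u)" for u
  have bounds: "q' \<le> f u \<and> f u \<le> j" if u: "u < k" for u
  proof (cases "u < s")
    case True
    then have "u = s - 1 \<or> u < s - 1" by linarith
    then have "X'!u \<le> X'!(s-1)" using X'_less[of u "s-1"] s by (auto simp: less_imp_le)
    then show ?thesis using True X'_bounds[of u] X_bounds[of s] s u by (auto simp: f_def)
  next
    case False
    then have "X!s \<le> X!u" using X_less[of s u] u by (cases "u = s") auto
    then show ?thesis using False X'_bounds[of "s-1"] X_bounds[of u] s u by (auto simp: f_def)
  qed
  have "f u < f (Suc u) \<and> a (f u) < a (f (Suc u))" if "Suc u < k" for u
  proof -
    consider "Suc u < s" | "Suc u = s" | "s \<le> u" by linarith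
    then show ?thesis
      by cases (use that X'_less[of u "Suc u"] X_less[of u "Suc u"] s lt in \<open>auto simp: f_def\<close>)
  qed
  with bounds have "inc_sub a q' j (map f [0..<k])" by (simp add: inc_sub_map_upt_iff)
  moreover have "q' \<le> j" using X'_bounds[of "s-1"] X_bounds[of s] s by auto
  ultimately show False using latest_start[of q'] q_less by fastforce
qed

lemma run_start_before:
  assumes "r \<in> S" "r - 1 \<notin> S"
  shows "X!(r-1) < X'!(r-1)"
proof (cases "r = 1")
  case True
  then show ?thesis using X_0 q_less X'_bounds[of 0] k by auto
next
  case False
  then have "1 \<le> r - 1" "r - 2 < r - 1" "r - 1 < k" "r - 1 - 1 = r - 2"
    using assms(1) by (auto simp: S_def)
  then show ?thesis
    using assms(2) X'_less[of "r-2" "r-1"] by (auto simp: S_def)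
qed

lemma run_end_value_less:
  assumes t: "t \<in> S" "Suc t < k" "Suc t \<notin> S"
  shows "a (X'!(t-1)) < a (X!Suc t)"
proof (rule ccontr)
  assume not_less: "\<not> ?thesis"
  have t': "1 \<le> t" "X'!(t-1) < X!t" using t by (auto simp: S_def)
  have v1: "a (X!Suc t) < a (X'!(t-1))"
    using not_less value_neq[of "Suc t" "t-1"] X_less[of t "Suc t"] t t' by fastforce
  have v2: "a (X'!(t-1)) < a (X'!t)" using X'_less[of "t-1" t] t t' by auto
  have p: "X!Suc t < X'!t"
    using t v1 v2 by (cases "X!Suc t = X'!t") (auto simp: S_def)
  have last: "X'!(k-1) \<le> j'" using X'_bounds[of "k-1"] k by auto
  define g where "g u = (if u \<le> t then X!Suc u else X'!(u-1))" for u
  have bounds: "Suc q \<le> g u \<and> g u \<le> j' - 1" if u: "u < k" for u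
  proof (cases "u \<le> t")
    case True
    have "X!0 < X!Suc u" using X_less[of 0 "Suc u"] True t by auto
    moreover have "X!Suc u \<le> X!Suc t" using X_less[of "Suc u" "Suc t"] True t
      by (cases "u = t") auto
    moreover have "X'!t < X'!(k-1)" using X'_less[of t "k-1"] t by auto
    ultimately show ?thesis using True X_0 p last by (auto simp: g_def)
  next
    case False
    have "X'!(u-1) < X'!(k-1)" "u - 1 < k" using X'_less[of "u-1" "k-1"] False u by auto
    then show ?thesis using False X'_bounds[of "u-1"] q_less last u by (auto simp: g_def)
  qed
  have "g u < g (Suc u) \<and> a (g u) < a (g (Suc u))" if u: "Suc u < k" for u
  proof -
    consider "Suc u \<le> t" | "u = t" | "t < u" by linarith
    then show ?thesis
      by cases (use X_less[of "Suc u" "Suc (Suc u)"] X'_less[of "u-1" u] t u p v1 v2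
                in \<open>auto simp: g_def\<close>)
  qed
  with bounds have W: "inc_sub a (Suc q) (j' - 1) (map g [0..<k])"
    by (simp add: inc_sub_map_upt_iff)
  have "Suc q \<le> j' - 1" using inc_sub_nth_bounds[OF W, of 0] k by simp
  then have "j' \<le> j' - 1" using earliest_end[OF W] j'_less by simp
  with \<open>Suc q \<le> j' - 1\<close> show False by linarith
qed

lemma no_maximal_run:
  assumes run: "r \<le> t" "{r..t} \<subseteq> S" "r - 1 \<notin> S"
    and t_end: "Suc t = k \<or> a (X'!(t-1)) < a (X!Suc t)"
  shows False
proof -
  have r: "1 \<le> r" "r \<in> S" "r < k" "t < k" using run by (auto simp: S_def)
  have in_run: "1 \<le> u \<and> u < k \<and> u - 1 < k \<and> X'!(u-1) < X!u" if "r \<le> u" "u \<le> t" for u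
    using run that by (auto simp: S_def)
  define f where "f u = (if r \<le> u \<and> u \<le> t then X'!(u-1) else X!u)" for u
  have bounds: "q \<le> f u \<and> f u \<le> j" if "u < k" for u
    using that in_run[of u] X'_bounds[of "u-1"] X_bounds[of u] q_less by (auto simp: f_def)
  have "f u < f (Suc u) \<and> a (f u) < a (f (Suc u))" if u: "Suc u < k" for u
  proof -
    consider "Suc u < r" | "Suc u = r" | "r \<le> u \<and> Suc u \<le> t" | "u = t" | "t < u"
      by linarith
    then show ?thesis
    proof cases
      case 2
      then show ?thesis
        using run_start_before[of r] S_value_less[of r] X_less[of u r] r run
        by (auto simp: f_def)
    next
      case 3
      then show ?thesis using X'_less[of "u-1" u] in_run[of u] u by (auto simp: f_def)
    next
      case 4
      then show ?thesis using X_less[of t "Suc t"] in_run[of t] t_end u run by (auto simp: f_def)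
    qed (use X_less[of u "Suc u"] u in \<open>auto simp: f_def\<close>)
  qed
  with bounds have Z: "inc_sub a q j (map f [0..<k])" by (simp add: inc_sub_map_upt_iff)
  have "take r (map f [0..<k]) = take r X"
    using r length_X by (intro nth_equalityI) (auto simp: f_def)
  then have "X!r \<le> f r"
    using lexmin_inc_sub_nth_le[OF X Z] r by simp
  then show False using in_run[of r] run by (simp add: f_def)
qed

theorem X_le_X'_pred:
  assumes "1 \<le> s" "s < k"
  shows "X!s \<le> X'!(s-1)"
proof (rule ccontr)
  assume "\<not> ?thesis"
  with assms have "s \<in> S" by (auto simp: S_def)
  have fin: "finite S" by (rule finite_subset[of _ "{..<k}"]) (auto simp: S_def)
  define t where "t = Max S"
  have t: "t \<in> S" using fin \<open>s \<in> S\<close> Max_in by (auto simp: t_def)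
  have "Suc t \<notin> S" using Max_ge[OF fin, of "Suc t"] by (auto simp: t_def)
  then have t_end: "Suc t = k \<or> a (X'!(t-1)) < a (X!Suc t)"
    using t run_end_value_less[of t] by (cases "Suc t < k") (auto simp: S_def)
  obtain r where r: "r \<le> t" "{r..t} \<subseteq> S" "r = 0 \<or> r - 1 \<notin> S"
    using run_start_exists[OF t] by blast
  have "0 \<notin> S" by (simp add: S_def)
  with r have "r - 1 \<notin> S" by auto
  with r t_end show False by (intro no_maximal_run) auto
qed

end

theorem lemma2:
  fixes a :: "nat \<Rightarrow> real" and n k i q j q' j' :: nat and X X' :: "nat list"
  assumes distinct: "inj_on a {..<n}"
    and k: "k > 1"
    and reach: "cover_reach a n k i"
    and seg1: "cover_step a n k i = Some (q, j)"
    and seg2: "cover_step a n k (Suc q) = Some (q', j')"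
    and X: "lexmin_inc_sub a k q j X"
    and X': "lexmin_inc_sub a k q' j' X'"
  shows "\<forall>t. 1 \<le> t \<and> t < k \<longrightarrow> X' ! (t - 1) \<ge> X ! t"
proof -
  interpret consecutive_segments a n k q j q' j' X X'
  proof
    show "inc_sub a q' j' X'" "length X' = k" using X' by (auto simp: lexmin_inc_sub_def)
    show "j < n" using cover_step_end[OF seg1] by simp
    show "j' < n" using cover_step_end[OF seg2] by simp
    show "q < q'" using cover_step_start_ge[OF seg2] by simp
  qed (use distinct k X cover_step_latest_start[OF seg1] cover_step_earliest_end[OF seg2] in auto)
  show ?thesis using X_le_X'_pred by blast
qed

end
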